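(* Under the hypotheses and notation of the following setting — $X$ binary (values $x,x'$), $Y$ binary (values $y,y'$), $Z, C$ discrete with $Z\cup C$ containing no descendant of $X$, $P(c)>0$ — define $$L=\sum_z \max\{0,\ P(y_x\mid z,c)-P(y_{x'}\mid z,c),\ P(y\mid z,c)-P(y_{x'}\mid z,c),\ P(y_x\mid z,c)-P(y\mid z,c)\}P(z\mid c),$$ $$U=\sum_z \min\{P(y_x\mid z,c),\ P(y'_{x'}\mid z,c),\ P(y,x\mid z,c)+P(y',x'\mid z,c),\ P(y_x\mid z,c)-P(y_{x'}\mid z,c)+P(y,x'\mid z,c)+P(y',x\mid z,c)\}P(z\mid c),$$ $$L_0=\max\{0,\ P(y_x\mid c)-P(y_{x'}\mid c),\ P(y\mid c)-P(y_{x'}\mid c),\ P(y_x\mid c)-P(y\mid c)\},$$ $$U_0=\min\{P(y_x\mid c),\ P(y'_{x'}\mid c),\ P(y,x\mid c)+P(y',x'\mid c),\ P(y_x\mid c)-P(y_{x'}\mid c)+P(y,x'\mid c)+P(y',x\mid c)\}.$$ Then $L\ge L_0$ and $U\le U_0$. Consequently, for any $\beta,\gamma,\theta,\delta$, the interval for the benefit function $f(c)$ obtained from $(L,U)$ as in the statement "$W+\sigma L\le f(c)\le W+\sigma U$ if $\sigma>0$, $W+\sigma U\le f(c)\le W+\sigma L$ if $\sigma<0$" (with $\sigma=\beta-\gamma-\theta+\delta$, $W=(\gamma-\delta)P(y_x\mid c)+\delta P(y_{x'}\mid c)+\theta P(y'_{x'}\mid c)$) is contained in the interval obtained in the same way from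 $(L_0,U_0)$.
   Context: $Y_x$ denotes the counterfactual variable "the value $Y$ would take had $X$ been set to $x$" in a structural causal model; $y_x$ is the event $Y_x=y$. Unsubscripted probabilities such as $P(y\mid z,c)$, $P(y,x\mid c)$ are observational. Consistency: $X=x$ implies $Y_x=Y$. Sums over $z$ range over values of $Z$ with $P(z\mid c)>0$. The benefit function is $f(c)=\beta P(y_x,y'_{x'}\mid c)+\gamma P(y_x,y_{x'}\mid c)+\theta P(y'_x,y'_{x'}\mid c)+\delta P(y_{x'},y'_x\mid c)$. *)

theory Defs
  imports "HOL-Probability.Probability"
begin

text \<open>Population of units u drawn from a discrete distribution p.
  Binary X: x = True, x' = False.  Binary Y: y = True, y' = False.
  Yx u = Y_x(u), Yx' u = Y_{x'}(u) (counterfactual outcomes).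
  Z and C are not descendants of X, so they are not indexed by x.\<close>

definition Pr :: "'u pmf \<Rightarrow> ('u \<Rightarrow> bool) \<Rightarrow> real" where
  "Pr p A = measure_pmf.prob p {u. A u}"

definition cPr :: "'u pmf \<Rightarrow> ('u \<Rightarrow> bool) \<Rightarrow> ('u \<Rightarrow> bool) \<Rightarrow> real" where
  "cPr p A B = Pr p (\<lambda>u. A u \<and> B u) / Pr p B"

definition lowB :: "'u pmf \<Rightarrow> ('u \<Rightarrow> bool) \<Rightarrow> ('u \<Rightarrow> bool) \<Rightarrow> ('u \<Rightarrow> bool)
    \<Rightarrow> ('u \<Rightarrow> bool) \<Rightarrow> real" where
  "lowB p Y Yx Yx' B =
     max 0 (max (cPr p Yx B - cPr p Yx' B)
           (max (cPr p Y B - cPr p Yx' B) (cPr p Yx B - cPr p Y B)))"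

definition uppB :: "'u pmf \<Rightarrow> ('u \<Rightarrow> bool) \<Rightarrow> ('u \<Rightarrow> bool) \<Rightarrow> ('u \<Rightarrow> bool)
    \<Rightarrow> ('u \<Rightarrow> bool) \<Rightarrow> ('u \<Rightarrow> bool) \<Rightarrow> real" where
  "uppB p X Y Yx Yx' B =
     min (cPr p Yx B)
      (min (cPr p (\<lambda>u. \<not> Yx' u) B)
        (min (cPr p (\<lambda>u. Y u \<and> X u) B + cPr p (\<lambda>u. \<not> Y u \<and> \<not> X u) B)
             (cPr p Yx B - cPr p Yx' B + cPr p (\<lambda>u. Y u \<and> \<not> X u) B
                + cPr p (\<lambda>u. \<not> Y u \<and> X u) B)))"

definition Lz :: "'u pmf \<Rightarrow> ('u \<Rightarrow> bool) \<Rightarrow> ('u \<Rightarrow> bool) \<Rightarrow> ('u \<Rightarrow> bool)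
    \<Rightarrow> ('u \<Rightarrow> 'z) \<Rightarrow> ('u \<Rightarrow> 'c) \<Rightarrow> 'c \<Rightarrow> real" where
  "Lz p Y Yx Yx' Z C c =
     (\<Sum>\<^sub>\<infinity>z\<in>{z. cPr p (\<lambda>u. Z u = z) (\<lambda>u. C u = c) > 0}.
        lowB p Y Yx Yx' (\<lambda>u. Z u = z \<and> C u = c) * cPr p (\<lambda>u. Z u = z) (\<lambda>u. C u = c))"

definition Uz :: "'u pmf \<Rightarrow> ('u \<Rightarrow> bool) \<Rightarrow> ('u \<Rightarrow> bool) \<Rightarrow> ('u \<Rightarrow> bool) \<Rightarrow> ('u \<Rightarrow> bool)
    \<Rightarrow> ('u \<Rightarrow> 'z) \<Rightarrow> ('u \<Rightarrow> 'c) \<Rightarrow> 'c \<Rightarrow> real" where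
  "Uz p X Y Yx Yx' Z C c =
     (\<Sum>\<^sub>\<infinity>z\<in>{z. cPr p (\<lambda>u. Z u = z) (\<lambda>u. C u = c) > 0}.
        uppB p X Y Yx Yx' (\<lambda>u. Z u = z \<and> C u = c) * cPr p (\<lambda>u. Z u = z) (\<lambda>u. C u = c))"

end

theory Submission
  imports Defs
begin

text \<open>Both bounds are expectations over the strata Z = z of the conditional population C = c.
  By the law of total probability each expression inside the max of L0 (or the min of U0) is
  the expectation of the same expression computed per stratum; a maximum of expectations is
  at most the expectation of the maximum, and dually for the minimum.  The statement about
  the benefit intervals then only uses the sign of \<sigma>.\<close>

lemma Pr_nonneg: "0 \<le> Pr p A"
  unfolding Pr_def by simp

lemma Pr_mono: "(\<And>u. A u \<Longrightarrow> B u) \<Longrightarrow> Pr p A \<le> Pr p B"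
  unfolding Pr_def by (rule measure_pmf.finite_measure_mono) auto

lemma cPr_nonneg: "0 \<le> cPr p A B"
  unfolding cPr_def by (simp add: Pr_nonneg)

lemma cPr_le_1: "cPr p A B \<le> 1"
proof -
  have "Pr p (\<lambda>u. A u \<and> B u) \<le> Pr p B"
    by (rule Pr_mono) auto
  then show ?thesis
    unfolding cPr_def using Pr_nonneg[of p B] by (cases "Pr p B = 0") (auto simp: divide_le_eq_1)
qed

lemma cPr_True: "Pr p B \<noteq> 0 \<Longrightarrow> cPr p (\<lambda>u. True) B = 1"
  unfolding cPr_def by simp

lemma has_sum_Pr_strata:
  "((\<lambda>z. Pr p (\<lambda>u. A u \<and> Z u = z \<and> B u)) has_sum Pr p (\<lambda>u. A u \<and> B u)) UNIV"
proof -
  define q where "q = map_pmf (\<lambda>u. (A u \<and> B u, Z u)) p"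
  have stratum: "Pr p (\<lambda>u. A u \<and> Z u = z \<and> B u) = pmf q (True, z)" for z
    unfolding q_def pmf_map Pr_def by (rule arg_cong[where f="measure_pmf.prob p"]) auto
  have "(pmf q has_sum measure_pmf.prob q (range (Pair True))) (range (Pair True))"
    by (metis measure_pmf_conv_infsetsum pmf_abs_summable abs_summable_equivalent
        abs_summable_summable has_sum_infsum infsetsum_infsum)
  then have "((pmf q \<circ> Pair True) has_sum measure_pmf.prob q (range (Pair True))) UNIV"
    by (subst (asm) has_sum_reindex) (auto simp: inj_on_def)
  moreover have "measure_pmf.prob q (range (Pair True)) = Pr p (\<lambda>u. A u \<and> B u)"
    unfolding q_def Pr_def measure_map_pmf by (rule arg_cong[where f="measure_pmf.prob p"]) auto
  ultimately show ?thesis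
    by (simp add: stratum o_def)
qed

lemma has_sum_cPr_total:
  assumes "Pr p (\<lambda>u. C u = c) > 0"
  shows "((\<lambda>z. cPr p A (\<lambda>u. Z u = z \<and> C u = c) * cPr p (\<lambda>u. Z u = z) (\<lambda>u. C u = c))
     has_sum cPr p A (\<lambda>u. C u = c)) {z. cPr p (\<lambda>u. Z u = z) (\<lambda>u. C u = c) > 0}"
proof -
  define D where "D = Pr p (\<lambda>u. C u = c)"
  have stratum: "cPr p A (\<lambda>u. Z u = z \<and> C u = c) * cPr p (\<lambda>u. Z u = z) (\<lambda>u. C u = c)
      = Pr p (\<lambda>u. A u \<and> Z u = z \<and> C u = c) / D" for z
  proof (cases "Pr p (\<lambda>u. Z u = z \<and> C u = c) = 0")
    case True
    have "Pr p (\<lambda>u. A u \<and> Z u = z \<and> C u = c) \<le> Pr p (\<lambda>u. Z u = z \<and> C u = c)"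
      by (rule Pr_mono) auto
    with True have "Pr p (\<lambda>u. A u \<and> Z u = z \<and> C u = c) = 0"
      using Pr_nonneg by (metis order_antisym)
    with True show ?thesis
      by (simp add: cPr_def)
  qed (simp add: cPr_def D_def)
  have total: "((\<lambda>z. Pr p (\<lambda>u. A u \<and> Z u = z \<and> C u = c) / D) has_sum cPr p A (\<lambda>u. C u = c)) UNIV"
    unfolding cPr_def D_def by (rule has_sum_divide_const, rule has_sum_Pr_strata)
  show ?thesis
  proof (rule has_sum_cong_neutral[THEN iffD2, OF _ _ _ total])
    fix z
    assume "z \<in> UNIV - {z. cPr p (\<lambda>u. Z u = z) (\<lambda>u. C u = c) > 0}"
    then have "cPr p (\<lambda>u. Z u = z) (\<lambda>u. C u = c) = 0"
      using cPr_nonneg[of p "\<lambda>u. Z u = z" "\<lambda>u. C u = c"] by simp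
    then show "Pr p (\<lambda>u. A u \<and> Z u = z \<and> C u = c) / D = 0"
      using stratum[of z] by simp
  qed (use stratum in auto)
qed

lemma has_sum_diff:
  fixes f g :: "'a \<Rightarrow> 'b::topological_ab_group_add"
  assumes "(f has_sum a) S" and "(g has_sum b) S"
  shows "((\<lambda>x. f x - g x) has_sum (a - b)) S"
proof -
  have minus_g: "((\<lambda>x. - g x) has_sum - b) S"
    using assms(2) by (simp add: has_sum_uminus)
  show ?thesis
    using has_sum_add[OF assms(1) minus_g] by simp
qed

lemma has_sum_weighted_add:
  fixes f g w :: "'a \<Rightarrow> real"
  assumes "((\<lambda>z. f z * w z) has_sum a) S" and "((\<lambda>z. g z * w z) has_sum b) S"
  shows "((\<lambda>z. (f z + g z) * w z) has_sum (a + b)) S"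
  using has_sum_add[OF assms] by (simp add: distrib_right)

lemma has_sum_weighted_diff:
  fixes f g w :: "'a \<Rightarrow> real"
  assumes "((\<lambda>z. f z * w z) has_sum a) S" and "((\<lambda>z. g z * w z) has_sum b) S"
  shows "((\<lambda>z. (f z - g z) * w z) has_sum (a - b)) S"
  using has_sum_diff[OF assms] by (simp add: left_diff_distrib)

lemma has_sum_weighted_mono:
  fixes f g w :: "'a \<Rightarrow> real"
  assumes "((\<lambda>z. f z * w z) has_sum a) S" and "((\<lambda>z. g z * w z) has_sum b) S"
    and "\<And>z. f z \<le> g z" and "\<And>z. 0 \<le> w z"
  shows "a \<le> b"
  using assms by (intro has_sum_mono[OF assms(1,2)] mult_right_mono)

lemma has_sum_weighted_bounded:
  fixes f w :: "'a \<Rightarrow> real"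
  assumes "w summable_on S" and "\<And>z. 0 \<le> w z" and "\<And>z. \<bar>f z\<bar> \<le> 1"
  shows "((\<lambda>z. f z * w z) has_sum (\<Sum>\<^sub>\<infinity>z\<in>S. f z * w z)) S"
proof -
  have "norm (f z * w z) \<le> w z" for z
    using assms(2,3)[of z] by (auto simp: abs_mult intro: mult_left_le_one_le)
  then have "(\<lambda>z. norm (f z * w z)) summable_on S"
    by (rule Infinite_Sum.abs_summable_on_comparison_test'[OF assms(1)])
  then show ?thesis
    by (intro has_sum_infsum Infinite_Sum.abs_summable_summable[of "\<lambda>z. f z * w z"])
qed

lemma lowB_bounds: "0 \<le> lowB p Y Yx Yx' B" "lowB p Y Yx Yx' B \<le> 1"
  using cPr_nonneg[of p Yx B] cPr_le_1[of p Yx B] cPr_nonneg[of p Yx' B] cPr_le_1[of p Yx' B]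
    cPr_nonneg[of p Y B] cPr_le_1[of p Y B]
  unfolding lowB_def by auto

lemma abs_uppB_le_1: "\<bar>uppB p X Y Yx Yx' B\<bar> \<le> 1"
  using cPr_nonneg[of p Yx B] cPr_le_1[of p Yx B] cPr_nonneg[of p Yx' B] cPr_le_1[of p Yx' B]
    cPr_nonneg[of p "\<lambda>u. \<not> Yx' u" B] cPr_nonneg[of p "\<lambda>u. Y u \<and> X u" B]
    cPr_nonneg[of p "\<lambda>u. \<not> Y u \<and> \<not> X u" B] cPr_nonneg[of p "\<lambda>u. Y u \<and> \<not> X u" B]
    cPr_nonneg[of p "\<lambda>u. \<not> Y u \<and> X u" B]
  unfolding uppB_def by (auto simp: min_le_iff_disj abs_le_iff)

context
  fixes p :: "'u pmf" and Z :: "'u \<Rightarrow> 'z" and C :: "'u \<Rightarrow> 'c" and c :: 'c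
  assumes Pc_pos: "Pr p (\<lambda>u. C u = c) > 0"
begin

lemma has_sum_stratum_weights:
  "((\<lambda>z. cPr p (\<lambda>u. Z u = z) (\<lambda>u. C u = c)) has_sum 1)
     {z. cPr p (\<lambda>u. Z u = z) (\<lambda>u. C u = c) > 0}"
proof -
  have stratum_certain: "cPr p (\<lambda>u. True) (\<lambda>u. Z u = z \<and> C u = c) = 1"
    if "cPr p (\<lambda>u. Z u = z) (\<lambda>u. C u = c) > 0" for z
    using that by (intro cPr_True) (auto simp: cPr_def)
  have "cPr p (\<lambda>u. True) (\<lambda>u. C u = c) = 1"
    using Pc_pos by (intro cPr_True) simp
  with has_sum_cPr_total[OF Pc_pos, of "\<lambda>u. True" Z]
  have "((\<lambda>z. cPr p (\<lambda>u. True) (\<lambda>u. Z u = z \<and> C u = c) * cPr p (\<lambda>u. Z u = z) (\<lambda>u. C u = c))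
      has_sum 1) {z. cPr p (\<lambda>u. Z u = z) (\<lambda>u. C u = c) > 0}"
    by simp
  then show ?thesis
    by (rule has_sum_cong[THEN iffD1, rotated]) (simp add: stratum_certain)
qed

lemma has_sum_Lz:
  "((\<lambda>z. lowB p Y Yx Yx' (\<lambda>u. Z u = z \<and> C u = c) * cPr p (\<lambda>u. Z u = z) (\<lambda>u. C u = c))
     has_sum Lz p Y Yx Yx' Z C c) {z. cPr p (\<lambda>u. Z u = z) (\<lambda>u. C u = c) > 0}"
  unfolding Lz_def
  by (intro has_sum_weighted_bounded has_sum_imp_summable[OF has_sum_stratum_weights] cPr_nonneg)
    (simp add: abs_le_iff lowB_bounds order_trans[OF _ lowB_bounds(1)])

lemma has_sum_Uz:
  "((\<lambda>z. uppB p X Y Yx Yx' (\<lambda>u. Z u = z \<and> C u = c) * cPr p (\<lambda>u. Z u = z) (\<lambda>u. C u = c))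
     has_sum Uz p X Y Yx Yx' Z C c) {z. cPr p (\<lambda>u. Z u = z) (\<lambda>u. C u = c) > 0}"
  unfolding Uz_def
  by (intro has_sum_weighted_bounded has_sum_imp_summable[OF has_sum_stratum_weights] cPr_nonneg
      abs_uppB_le_1)

lemma le_Lz_if_le_lowB:
  assumes "((\<lambda>z. e (\<lambda>u. Z u = z \<and> C u = c) * cPr p (\<lambda>u. Z u = z) (\<lambda>u. C u = c)) has_sum a)
      {z. cPr p (\<lambda>u. Z u = z) (\<lambda>u. C u = c) > 0}"
    and "\<And>B. e B \<le> lowB p Y Yx Yx' B"
  shows "a \<le> Lz p Y Yx Yx' Z C c"
  using has_sum_weighted_mono[OF assms(1) has_sum_Lz] assms(2) cPr_nonneg by blast

lemma Uz_le_if_uppB_le: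
  assumes "((\<lambda>z. e (\<lambda>u. Z u = z \<and> C u = c) * cPr p (\<lambda>u. Z u = z) (\<lambda>u. C u = c)) has_sum a)
      {z. cPr p (\<lambda>u. Z u = z) (\<lambda>u. C u = c) > 0}"
    and "\<And>B. uppB p X Y Yx Yx' B \<le> e B"
  shows "Uz p X Y Yx Yx' Z C c \<le> a"
  using has_sum_weighted_mono[OF has_sum_Uz assms(1)] assms(2) cPr_nonneg by blast

lemma lowB_le_Lz: "lowB p Y Yx Yx' (\<lambda>u. C u = c) \<le> Lz p Y Yx Yx' Z C c"
proof -
  note total = has_sum_cPr_total[OF Pc_pos]
  note diff = has_sum_weighted_diff[OF total total]
  have "0 \<le> Lz p Y Yx Yx' Z C c"
    by (rule le_Lz_if_le_lowB[where e="\<lambda>_. 0"]) (simp_all add: lowB_bounds)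
  moreover have "cPr p Yx (\<lambda>u. C u = c) - cPr p Yx' (\<lambda>u. C u = c) \<le> Lz p Y Yx Yx' Z C c"
    by (rule le_Lz_if_le_lowB[OF diff]) (simp add: lowB_def)
  moreover have "cPr p Y (\<lambda>u. C u = c) - cPr p Yx' (\<lambda>u. C u = c) \<le> Lz p Y Yx Yx' Z C c"
    by (rule le_Lz_if_le_lowB[OF diff]) (simp add: lowB_def)
  moreover have "cPr p Yx (\<lambda>u. C u = c) - cPr p Y (\<lambda>u. C u = c) \<le> Lz p Y Yx Yx' Z C c"
    by (rule le_Lz_if_le_lowB[OF diff]) (simp add: lowB_def)
  ultimately show ?thesis
    unfolding lowB_def by simp
qed

lemma Uz_le_uppB: "Uz p X Y Yx Yx' Z C c \<le> uppB p X Y Yx Yx' (\<lambda>u. C u = c)"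
proof -
  note total = has_sum_cPr_total[OF Pc_pos]
  note sum = has_sum_weighted_add[OF total total]
  note combined = has_sum_weighted_add[OF has_sum_weighted_add[OF has_sum_weighted_diff[OF total total] total] total]
  have "Uz p X Y Yx Yx' Z C c \<le> cPr p Yx (\<lambda>u. C u = c)"
    by (rule Uz_le_if_uppB_le[OF total]) (simp add: uppB_def)
  moreover have "Uz p X Y Yx Yx' Z C c \<le> cPr p (\<lambda>u. \<not> Yx' u) (\<lambda>u. C u = c)"
    by (rule Uz_le_if_uppB_le[OF total]) (simp add: uppB_def)
  moreover have "Uz p X Y Yx Yx' Z C c
      \<le> cPr p (\<lambda>u. Y u \<and> X u) (\<lambda>u. C u = c) + cPr p (\<lambda>u. \<not> Y u \<and> \<not> X u) (\<lambda>u. C u = c)"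
    by (rule Uz_le_if_uppB_le[OF sum]) (simp add: uppB_def)
  moreover have "Uz p X Y Yx Yx' Z C c
      \<le> cPr p Yx (\<lambda>u. C u = c) - cPr p Yx' (\<lambda>u. C u = c)
        + cPr p (\<lambda>u. Y u \<and> \<not> X u) (\<lambda>u. C u = c) + cPr p (\<lambda>u. \<not> Y u \<and> X u) (\<lambda>u. C u = c)"
    by (rule Uz_le_if_uppB_le[OF combined]) (simp add: uppB_def)
  ultimately show ?thesis
    unfolding uppB_def by simp
qed

end

lemma scaled_interval_subset:
  fixes L U L0 U0 W \<sigma> :: real
  assumes "L0 \<le> L" and "U \<le> U0"
  shows "\<sigma> > 0 \<Longrightarrow> {W + \<sigma> * L .. W + \<sigma> * U} \<subseteq> {W + \<sigma> * L0 .. W + \<sigma> * U0}"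
    and "\<sigma> < 0 \<Longrightarrow> {W + \<sigma> * U .. W + \<sigma> * L} \<subseteq> {W + \<sigma> * U0 .. W + \<sigma> * L0}"
  using assms by (auto intro: mult_left_mono mult_left_mono_neg order_trans)

theorem mainTheorem2:
  fixes p :: "'u pmf"
    and X Y Yx Yx' :: "'u \<Rightarrow> bool"
    and Z :: "'u \<Rightarrow> 'z" and C :: "'u \<Rightarrow> 'c" and c :: 'c
  assumes consistency_x: "\<And>u. X u \<Longrightarrow> Y u = Yx u"
    and consistency_x': "\<And>u. \<not> X u \<Longrightarrow> Y u = Yx' u"
    and Pc_pos: "Pr p (\<lambda>u. C u = c) > 0"
  defines "L \<equiv> Lz p Y Yx Yx' Z C c"
    and "U \<equiv> Uz p X Y Yx Yx' Z C c"
    and "L0 \<equiv> lowB p Y Yx Yx' (\<lambda>u. C u = c)"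
    and "U0 \<equiv> uppB p X Y Yx Yx' (\<lambda>u. C u = c)"
  shows "L \<ge> L0 \<and> U \<le> U0 \<and>
    (\<forall>\<beta> \<gamma> \<theta> \<delta> :: real.
       let \<sigma> = \<beta> - \<gamma> - \<theta> + \<delta>;
           W = (\<gamma> - \<delta>) * cPr p Yx (\<lambda>u. C u = c) + \<delta> * cPr p Yx' (\<lambda>u. C u = c)
               + \<theta> * cPr p (\<lambda>u. \<not> Yx' u) (\<lambda>u. C u = c)
       in (\<sigma> > 0 \<longrightarrow> {W + \<sigma> * L .. W + \<sigma> * U} \<subseteq> {W + \<sigma> * L0 .. W + \<sigma> * U0})
        \<and> (\<sigma> < 0 \<longrightarrow> {W + \<sigma> * U .. W + \<sigma> * L} \<subseteq> {W + \<sigma> * U0 .. W + \<sigma> * L0}))"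
proof -
  have "L0 \<le> L"
    unfolding L0_def L_def by (rule lowB_le_Lz[OF Pc_pos])
  moreover have "U \<le> U0"
    unfolding U_def U0_def by (rule Uz_le_uppB[OF Pc_pos])
  ultimately show ?thesis
    using scaled_interval_subset by (simp add: Let_def)
qed

end
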